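(* Let $n\ge 2$ and let $A$ be an associative (not necessarily unital) algebra over a field satisfying the identity $x_1x_2\cdots x_n=x_2x_3\cdots x_nx_1$ (i.e. the identity associated with the cycle $(1\,2\,\cdots\,n)\in S_n$). Then $A$ is eventually commutative of degree $n+1$.
   Context: An algebra $A$ satisfies an identity $x_1\cdots x_m=x_{\tau(1)}\cdots x_{\tau(m)}$ (with $\tau\in S_m$) if $a_1\cdots a_m=a_{\tau(1)}\cdots a_{\tau(m)}$ for all $a_1,\dots,a_m\in A$. $A$ is eventually commutative of degree $k$ if it satisfies $x_1\cdots x_k=x_{\tau(1)}\cdots x_{\tau(k)}$ for every $\tau\in S_k$. *)

theory Defs
  imports Complex_Main "HOL-Combinatorics.Permutations"
begin

fun lprod :: "'a::semigroup_mult list \<Rightarrow> 'a" where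
  "lprod [] = undefined"
| "lprod [x] = x"
| "lprod (x # y # xs) = x * lprod (y # xs)"

text \<open>Associative (not necessarily unital) algebra over a field: a ring (class ring has
  no unit) which is a module over the field via s, with bilinear multiplication.\<close>
definition algebra_over :: "('k::field \<Rightarrow> 'a::ring \<Rightarrow> 'a) \<Rightarrow> bool" where
  "algebra_over s \<longleftrightarrow> module s \<and>
     (\<forall>c x y. s c (x * y) = s c x * y \<and> s c (x * y) = x * s c y)"

text \<open>A satisfies x_1...x_m = x_tau(1)...x_tau(m); indices shifted to 0..m-1.\<close>
definition satisfies_identity :: "'a::semigroup_mult itself \<Rightarrow> nat \<Rightarrow> (nat \<Rightarrow> nat) \<Rightarrow> bool" where
  "satisfies_identity _ m \<tau> \<longleftrightarrow>
     (\<forall>a :: nat \<Rightarrow> 'a. lprod (map a [0..<m]) = lprod (map (a \<circ> \<tau>) [0..<m]))"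

definition eventually_commutative :: "'a::semigroup_mult itself \<Rightarrow> nat \<Rightarrow> bool" where
  "eventually_commutative T k \<longleftrightarrow>
     (\<forall>\<tau>. \<tau> permutes {..<k} \<longrightarrow> satisfies_identity T k \<tau>)"

end

theory Submission
  imports Defs
begin

text \<open>Merging the last two letters of a word of
  length \<open>n + 1\<close> gives a word of length \<open>n\<close>, so the cyclic identity makes
  \<open>lprod\<close> invariant under rotating words of length \<open>n + 1\<close>. Combining one such rotation
  with one rotation of length \<open>n\<close> exchanges the first and last letters; conjugating by
  rotations turns this into the exchange of any two adjacent letters, and adjacent
  transpositions generate the symmetric group.\<close>

lemma lprod_Cons: "xs \<noteq> [] \<Longrightarrow> lprod (x # xs) = x * lprod xs"
  by (cases xs) auto

lemma lprod_append:
  "xs \<noteq> [] \<Longrightarrow> ys \<noteq> [] \<Longrightarrow> lprod (xs @ ys) = lprod xs * lprod ys"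
  by (induction xs rule: induct_list012) (auto simp: lprod_Cons mult.assoc)

lemma lprod_append_mult: "lprod (u @ x * y # v) = lprod (u @ x # y # v)"
proof (induction u)
  case Nil
  then show ?case by (cases v) (auto simp: mult.assoc)
qed (simp add: lprod_Cons)

lemma map_nth_rotate_index:
  "map (nth xs \<circ> (\<lambda>i. (i + 1) mod length xs)) [0..<length xs] = rotate1 xs"
  by (rule nth_equalityI) (auto simp: nth_rotate[of _ xs 1, simplified] add.commute)

lemma satisfies_identity_lprod:
  assumes "satisfies_identity TYPE('a::semigroup_mult) m \<tau>"
    and "length (xs :: 'a list) = m"
  shows "lprod xs = lprod (map (nth xs \<circ> \<tau>) [0..<m])"
proof -
  have "lprod (map (nth xs) [0..<m]) = lprod (map (nth xs \<circ> \<tau>) [0..<m])"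
    using assms(1) unfolding satisfies_identity_def by (rule spec)
  then show ?thesis
    using assms(2) map_nth[of xs] by simp
qed

lemma satisfies_identity_cycle_lprod_rotate1:
  assumes "satisfies_identity TYPE('a::semigroup_mult) n (\<lambda>i. (i + 1) mod n)"
    and "length (xs :: 'a list) = n"
  shows "lprod xs = lprod (rotate1 xs)"
  using satisfies_identity_lprod[OF assms] map_nth_rotate_index[of xs] assms(2) by simp

lemma eventually_commutativeI:
  assumes "\<And>xs ys :: 'a::semigroup_mult list.
    length xs = k \<Longrightarrow> mset xs = mset ys \<Longrightarrow> lprod xs = lprod ys"
  shows "eventually_commutative TYPE('a) k"
  unfolding eventually_commutative_def satisfies_identity_def
proof (intro allI impI)
  fix \<tau> :: "nat \<Rightarrow> nat" and a :: "nat \<Rightarrow> 'a"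
  assume \<tau>: "\<tau> permutes {..<k}"
  have "\<tau> i < k" if "i < k" for i
    using permutes_in_image[OF \<tau>, of i] that by simp
  then have "permute_list \<tau> (map a [0..<k]) = map (a \<circ> \<tau>) [0..<k]"
    unfolding permute_list_def by simp
  moreover have "mset (permute_list \<tau> (map a [0..<k])) = mset (map a [0..<k])"
    using \<tau> by (intro mset_permute_list) simp
  ultimately show "lprod (map a [0..<k]) = lprod (map (a \<circ> \<tau>) [0..<k])"
    by (intro assms) simp_all
qed

lemma mset_eq_invariant_under_adjacent_swaps:
  assumes swap: "\<And>u x y v. length (u @ x # y # v) = k \<Longrightarrow>
      f (u @ x # y # v) = f (u @ y # x # v)"
    and "mset xs = mset ys" and "length (p @ xs) = k"
  shows "f (p @ xs) = f (p @ ys)"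
  using assms(2,3)
proof (induction ys arbitrary: xs p)
  case (Cons y ys)
  obtain u v where xs: "xs = u @ y # v"
    using Cons.prems(1) by (metis list.set_intros(1) set_mset_mset split_list)
  have move_front: "f (p @ u @ y # v) = f (p @ y # u @ v)"
    if "length (p @ u @ y # v) = k" for u v
    using that
  proof (induction u arbitrary: v rule: rev_induct)
    case (snoc z u)
    then have "f ((p @ u) @ z # y # v) = f ((p @ u) @ y # z # v)"
      by (intro swap) simp
    also have "\<dots> = f (p @ u @ y # z # v)"
      by simp
    also have "\<dots> = f (p @ y # u @ z # v)"
      using snoc.prems by (intro snoc.IH) simp
    finally show ?case by simp
  qed simp
  have "f (p @ xs) = f ((p @ [y]) @ u @ v)"
    using Cons.prems(2) xs move_front by simp
  also have "\<dots> = f ((p @ [y]) @ ys)"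
  proof (rule Cons.IH)
    show "mset (u @ v) = mset ys"
      using Cons.prems(1) xs by simp
    show "length ((p @ [y]) @ u @ v) = k"
      using Cons.prems(2) xs by simp
  qed
  finally show ?case by simp
qed simp

context
  fixes n :: nat
  assumes two_le_n: "2 \<le> n"
    and lprod_rotate1_n: "\<And>xs :: 'a::semigroup_mult list.
      length xs = n \<Longrightarrow> lprod xs = lprod (rotate1 xs)"
begin

lemma lprod_rotate1_Suc:
  assumes "length (xs :: 'a list) = n + 1"
  shows "lprod xs = lprod (rotate1 xs)"
proof -
  obtain x w where xs: "xs = x # w"
    using assms by (cases xs) auto
  obtain w' b where w: "w = w' @ [b]"
    using assms xs two_le_n by (cases w rule: rev_cases) auto
  obtain u a where "w' = u @ [a]"
    using assms xs w two_le_n by (cases w' rule: rev_cases) auto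
  with xs w have xs: "xs = x # u @ [a, b]"
    by simp
  have "lprod xs = lprod ((x # u) @ a * b # [])"
    using lprod_append_mult[of "x # u" a b "[]"] xs by simp
  also have "\<dots> = lprod (u @ [a * b] @ [x])"
    using lprod_rotate1_n[of "x # u @ [a * b]"] assms xs by simp
  also have "\<dots> = lprod (u @ [a, b] @ [x])"
    using lprod_append_mult[of u a b "[x]"] by simp
  finally show ?thesis using xs by simp
qed

lemma lprod_rotate_Suc:
  assumes "length (xs :: 'a list) = n + 1"
  shows "lprod xs = lprod (rotate k xs)"
proof (induction k)
  case (Suc k)
  have "lprod (rotate k xs) = lprod (rotate1 (rotate k xs))"
    using assms by (intro lprod_rotate1_Suc) simp
  with Suc show ?case
    by (simp add: rotate_Suc)
qed simp

lemma lprod_swap_ends: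
  assumes "length (m :: 'a list) = n - 1"
  shows "lprod (x # m @ [y]) = lprod (y # m @ [x])"
proof -
  have "lprod (x # m @ [y]) = lprod (m @ [y]) * x"
    using lprod_rotate1_Suc[of "x # m @ [y]"] lprod_append[of "m @ [y]" "[x]"] assms two_le_n
    by simp
  also have "lprod (m @ [y]) = lprod (y # m)"
    using lprod_rotate1_n[of "y # m"] assms two_le_n by simp
  finally show ?thesis
    using lprod_append[of "y # m" "[x]"] by simp
qed

lemma lprod_swap_adjacent:
  assumes "length (u @ x # y # v :: 'a list) = n + 1"
  shows "lprod (u @ x # y # v) = lprod (u @ y # x # v)"
proof -
  have "lprod (u @ x # y # v) = lprod (rotate (length u + 1) (u @ x # y # v))"
    using assms by (rule lprod_rotate_Suc)
  also have "\<dots> = lprod (y # (v @ u) @ [x])"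
    using rotate_append[of "u @ [x]" "y # v"] by simp
  also have "\<dots> = lprod (x # (v @ u) @ [y])"
    using assms by (intro lprod_swap_ends) simp
  also have "\<dots> = lprod (rotate (length u + 1) (u @ y # x # v))"
    using rotate_append[of "u @ [y]" "x # v"] by simp
  also have "\<dots> = lprod (u @ y # x # v)"
    using assms by (intro lprod_rotate_Suc[symmetric]) simp
  finally show ?thesis .
qed

lemma lprod_mset_eq_Suc:
  assumes "length (xs :: 'a list) = n + 1" and "mset xs = mset ys"
  shows "lprod xs = lprod ys"
  using mset_eq_invariant_under_adjacent_swaps[where f = lprod and k = "n + 1" and p = "[]",
      OF lprod_swap_adjacent assms(2)] assms(1)
  by simp

end

theorem theorem3p6:
  fixes s :: "'k::field \<Rightarrow> 'a::ring \<Rightarrow> 'a" and n :: nat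
  assumes "algebra_over s"
    and "n \<ge> 2"
    and "satisfies_identity TYPE('a) n (\<lambda>i. (i + 1) mod n)"
  shows "eventually_commutative TYPE('a) (n + 1)"
  using lprod_mset_eq_Suc[OF assms(2) satisfies_identity_cycle_lprod_rotate1[OF assms(3)]]
  by (rule eventually_commutativeI)

end
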